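(* Let $V$ be a set of $n$ vertices, $k$ a positive integer, $u,w\in V$ distinct, and $V_{uw}\subseteq V\setminus\{u,w\}$ a set of $k$ vertices partitioned as $V_{uw}=V_u\cup V_w$ with $V_u=\{v_1,\ldots,v_s\}$ and $V_w=\{v_{s+1},\ldots,v_k\}$. Let $t$ be a spanning tree of the complete graph on $V$ with at most $k$ leaves (vertices of degree $1$) such that each vertex of $V_u$ is adjacent in $t$ only to $u$, and each vertex of $V_w$ is adjacent in $t$ only to $w$. Let $t_h$ be the graph obtained from $t$ by deleting the vertices $v_1,\ldots,v_k$ together with their incident edges. Then $t_h$ is a Hamiltonian path on the $n-k$ vertices of $V\setminus V_{uw}$. *)

theory Defs
  imports Main
begin

text \<open>Simple graphs with vertex set V are given by edge sets E of 2-element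
  subsets of V (i.e. subgraphs of the complete graph on V).\<close>

definition graph_on :: "'a set \<Rightarrow> 'a set set \<Rightarrow> bool" where
  "graph_on V E \<longleftrightarrow> E \<subseteq> {{x, y} | x y. x \<in> V \<and> y \<in> V \<and> x \<noteq> y}"

definition connected_on :: "'a set \<Rightarrow> 'a set set \<Rightarrow> bool" where
  "connected_on V E \<longleftrightarrow> (\<forall>x\<in>V. \<forall>y\<in>V. (x, y) \<in> {(a, b). {a, b} \<in> E}\<^sup>*)"

definition is_cycle :: "'a set set \<Rightarrow> 'a list \<Rightarrow> bool" where
  "is_cycle E cs \<longleftrightarrow> length cs \<ge> 3 \<and> distinct cs \<and>
     (\<forall>i. Suc i < length cs \<longrightarrow> {cs ! i, cs ! Suc i} \<in> E) \<and> {last cs, hd cs} \<in> E"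

definition acyclic_graph :: "'a set set \<Rightarrow> bool" where
  "acyclic_graph E \<longleftrightarrow> \<not> (\<exists>cs. is_cycle E cs)"

definition spanning_tree :: "'a set \<Rightarrow> 'a set set \<Rightarrow> bool" where
  "spanning_tree V E \<longleftrightarrow> graph_on V E \<and> connected_on V E \<and> acyclic_graph E"

definition degree :: "'a set set \<Rightarrow> 'a \<Rightarrow> nat" where
  "degree E x = card {e \<in> E. x \<in> e}"

definition leaves :: "'a set \<Rightarrow> 'a set set \<Rightarrow> 'a set" where
  "leaves V E = {x \<in> V. degree E x = 1}"

definition delete_vertices :: "'a set set \<Rightarrow> 'a set \<Rightarrow> 'a set set" where
  "delete_vertices E S = {e \<in> E. e \<inter> S = {}}"

definition hamiltonian_path :: "'a set \<Rightarrow> 'a set set \<Rightarrow> bool" where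
  "hamiltonian_path W E \<longleftrightarrow> (\<exists>ps. distinct ps \<and> set ps = W \<and>
      E = {{ps ! i, ps ! Suc i} | i. Suc i < length ps})"

end

theory Submission
  imports Defs
begin

text \<open>Every vertex of \<open>V\<^sub>u\<^sub>w\<close> has a unique neighbour, \<open>u\<close> or \<open>w\<close>, so it is a leaf of
  \<open>t\<close>; since \<open>t\<close> has at most \<open>k\<close> leaves, these are all of them. Deleting pendant vertices
  keeps a tree connected and acyclic, and only their neighbours can become new leaves, so the
  pruned tree has no leaves besides \<open>u\<close> and \<open>w\<close>. A tree whose leaves lie among two vertices
  is a path.\<close>

abbreviation walk :: "'a set set \<Rightarrow> 'a list \<Rightarrow> bool" where
  "walk E xs \<equiv> successively (\<lambda>x y. {x, y} \<in> E) xs"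

lemma graph_on_edgeD:
  "graph_on V E \<Longrightarrow> {x, y} \<in> E \<Longrightarrow> x \<in> V \<and> y \<in> V \<and> x \<noteq> y"
  unfolding graph_on_def by (auto simp: doubleton_eq_iff)

lemma graph_on_edge_containing:
  "graph_on V E \<Longrightarrow> e \<in> E \<Longrightarrow> x \<in> e \<Longrightarrow> \<exists>y. e = {x, y}"
  unfolding graph_on_def by auto

lemma graph_on_degree_pos_imp_vertex:
  assumes "graph_on V E" and "degree E x \<noteq> 0"
  shows "x \<in> V"
proof -
  obtain e where "e \<in> E" "x \<in> e"
    using assms(2) unfolding degree_def by (metis (no_types, lifting) card.empty empty_Collect_eq)
  then show ?thesis using assms(1) unfolding graph_on_def by auto
qed

lemma degree_eq_1_if_unique_neighbour:
  assumes "graph_on V E" and "\<forall>y. {v, y} \<in> E \<longleftrightarrow> y = z"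
  shows "degree E v = 1"
proof -
  have "{e \<in> E. v \<in> e} = {{v, z}}"
    using assms graph_on_edge_containing[OF assms(1)] by fastforce
  then show ?thesis unfolding degree_def by simp
qed

lemma walk_set_subset:
  "walk E xs \<Longrightarrow> graph_on V E \<Longrightarrow> length xs \<ge> 2 \<Longrightarrow> set xs \<subseteq> V"
proof (induction xs rule: induct_list012)
  case (3 x y zs)
  then show ?case using graph_on_edgeD[OF 3(4), of x y] by (cases zs) auto
qed auto

lemma closed_walk_not_acyclic:
  assumes "distinct cs" and "walk E cs" and "length cs \<ge> 3" and "{last cs, hd cs} \<in> E"
  shows "\<not> acyclic_graph E"
  using assms unfolding acyclic_graph_def is_cycle_def successively_conv_nth by blast

lemma acyclic_graph_subset: "acyclic_graph E \<Longrightarrow> F \<subseteq> E \<Longrightarrow> acyclic_graph F"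
  unfolding acyclic_graph_def is_cycle_def by blast

lemma acyclic_path_no_chord:
  assumes "distinct ps" and "walk E ps" and "acyclic_graph E"
    and "i < j" and "j < length ps" and "{ps ! i, ps ! j} \<in> E"
  shows "j = Suc i"
proof (rule ccontr)
  assume "j \<noteq> Suc i"
  define cs where "cs = drop i (take (Suc j) ps)"
  have len: "length cs = Suc j - i" and nth: "\<And>m. m < length cs \<Longrightarrow> cs ! m = ps ! (i + m)"
    using assms(4,5) unfolding cs_def by simp_all
  have "walk E cs"
    unfolding successively_conv_nth
    using successively_nth[OF assms(2)] len nth assms(5) by (simp add: add_Suc_right)
  moreover have "distinct cs" using assms(1) unfolding cs_def by simp
  moreover have "length cs \<ge> 3" using len assms(4) \<open>j \<noteq> Suc i\<close> by simp
  moreover have "cs \<noteq> []" using len assms(4) by auto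
  then have "hd cs = ps ! i" and "last cs = ps ! j"
    using len nth assms(4,5) by (simp_all add: hd_conv_nth last_conv_nth)
  ultimately have "\<not> acyclic_graph E"
    using closed_walk_not_acyclic[of cs E] assms(6) by (simp add: insert_commute)
  then show False using assms(3) by simp
qed

text \<open>A neighbour of the end of a path other than its predecessor would close a cycle.\<close>
lemma acyclic_path_end_degree_eq_1:
  assumes g: "graph_on V E" and acyc: "acyclic_graph E"
    and d: "distinct ps" and s: "walk E ps" and len: "length ps \<ge> 2"
    and closed: "\<forall>y. {last ps, y} \<in> E \<longrightarrow> y \<in> set ps"
  shows "degree E (last ps) = 1"
proof -
  obtain ps1 e where "ps = ps1 @ [e]" using len by (cases ps rule: rev_cases) auto
  moreover obtain ps0 p where "ps1 = ps0 @ [p]"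
    using len calculation by (cases ps1 rule: rev_cases) auto
  ultimately have ps: "ps = ps0 @ [p, e]" by simp
  have pe: "{p, e} \<in> E" using s unfolding ps by (simp add: successively_append_iff)
  have "y = p" if ey: "{e, y} \<in> E" for y
  proof (rule ccontr)
    assume "y \<noteq> p"
    moreover have "y \<noteq> e" using graph_on_edgeD[OF g ey] by auto
    ultimately have "y \<in> set ps0" using closed ey unfolding ps by auto
    then obtain xs zs where "ps0 = xs @ y # zs" by (meson split_list)
    then have "distinct (y # zs @ [p, e])" and "walk E (y # zs @ [p, e])"
      using d s unfolding ps by (simp, simp add: successively_append_iff)
    then have "\<not> acyclic_graph E"
      using closed_walk_not_acyclic[of "y # zs @ [p, e]" E] ey by (simp add: insert_commute)
    then show False using acyc by simp
  qed
  then have "\<forall>y. {e, y} \<in> E \<longleftrightarrow> y = p" using pe by (metis insert_commute)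
  then show ?thesis using degree_eq_1_if_unique_neighbour[OF g] unfolding ps by simp
qed

text \<open>Take a longest extension avoiding \<open>ps\<close>; its end is a leaf, because a neighbour further
  along \<open>ps\<close> would close a cycle through \<open>ps ! j\<close>.\<close>
lemma acyclic_path_branch_extends_to_leaf:
  assumes fin: "finite V" and g: "graph_on V E" and acyc: "acyclic_graph E"
    and d: "distinct ps" and s: "walk E ps" and j: "j < length ps"
    and a: "a \<notin> set ps" and edge: "{ps ! j, a} \<in> E"
  obtains r where "r \<noteq> []" and "set r \<inter> set ps = {}"
    and "distinct (take (Suc j) ps @ r)" and "walk E (take (Suc j) ps @ r)"
    and "degree E (last r) = 1"
proof -
  define b where "b = ps ! j"
  define T where "T = take (Suc j) ps"
  have T: "T = take j ps @ [b]" unfolding T_def b_def using j by (simp add: take_Suc_conv_app_nth)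
  have dT: "distinct T" and sT: "walk E T"
    using d s unfolding T_def by (simp, metis append_take_drop_id successively_append_iff)
  define C where "C = {r. r \<noteq> [] \<and> set r \<inter> set ps = {} \<and> distinct (T @ r) \<and> walk E (T @ r)}"
  have "C \<subseteq> {r. set r \<subseteq> V \<and> distinct r}"
  proof
    fix r assume r: "r \<in> C"
    then have "length (T @ r) \<ge> 2" unfolding C_def T by (cases r) auto
    then show "r \<in> {r. set r \<subseteq> V \<and> distinct r}"
      using r walk_set_subset[OF _ g] unfolding C_def by fastforce
  qed
  then have finC: "finite C" using finite_subset finite_subset_distinct[OF fin] by blast
  have "[a] \<in> C"
    unfolding C_def using a dT sT edge j set_take_subset[of "Suc j" ps]
    unfolding T b_def by (auto simp: successively_append_iff dest: in_set_takeD)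
  then have "Max (length ` C) \<in> length ` C" using finC by (intro Max_in) auto
  then obtain r where r: "r \<in> C" and "length r = Max (length ` C)" by auto
  then have longest: "\<And>r'. r' \<in> C \<Longrightarrow> length r' \<le> length r" using finC by simp
  have ne: "r \<noteq> []" and disj: "set r \<inter> set ps = {}" and dTr: "distinct (T @ r)"
    and sTr: "walk E (T @ r)"
    using r unfolding C_def by auto
  have "y \<in> set (T @ r)" if ey: "{last r, y} \<in> E" for y
  proof (rule ccontr)
    assume y: "y \<notin> set (T @ r)"
    show False
    proof (cases "y \<in> set ps")
      case False
      then have "r @ [y] \<in> C" using r y ey unfolding C_def by (auto simp: successively_append_iff)
      then show False using longest by fastforce
    next
      case True
      have ps: "ps = T @ drop (Suc j) ps" unfolding T_def by simp
      then have "y \<in> set (drop (Suc j) ps)" using True y by (metis Un_iff set_append)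
      then obtain s1 s2 where "drop (Suc j) ps = s1 @ y # s2" by (meson split_list)
      then have ps': "ps = take j ps @ (b # s1 @ [y]) @ s2" using ps unfolding T by simp
      then have dP: "distinct (b # s1 @ [y])" and sP: "walk E (b # s1 @ [y])"
        and "set (b # s1 @ [y]) \<subseteq> set ps"
        using d s by (metis distinct_append, metis successively_append_iff,
            metis Un_iff set_append subsetI)
      then have "set r \<inter> set (b # s1 @ [y]) = {}" using disj by blast
      then have "distinct ((b # s1 @ [y]) @ rev r)" using dP dTr by auto
      moreover have "walk E ((b # s1 @ [y]) @ rev r)"
      proof (subst successively_append_iff, intro conjI)
        show "walk E (rev r)" using sTr by (simp add: successively_append_iff insert_commute)
      qed (use sP ey ne in \<open>auto simp: hd_rev insert_commute\<close>)
      moreover have "{b, hd r} \<in> E"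
        using sTr ne unfolding T by (cases r) (auto simp: successively_append_iff)
      ultimately have "\<not> acyclic_graph E"
        using closed_walk_not_acyclic[of "(b # s1 @ [y]) @ rev r" E] ne
        by (cases r) (auto simp: insert_commute)
      then show False using acyc by simp
    qed
  qed
  moreover have "length (T @ r) \<ge> 2" using ne unfolding T by (cases r) auto
  ultimately have "degree E (last (T @ r)) = 1"
    using acyclic_path_end_degree_eq_1[OF g acyc dTr sTr] ne by simp
  then have "degree E (last r) = 1" using ne by simp
  with ne disj dTr sTr show ?thesis unfolding T_def by (rule that)
qed

lemma reachable_set_has_entering_edge:
  assumes "(x, y) \<in> {(a, b). {a, b} \<in> E}\<^sup>*" and "x \<notin> S" and "y \<in> S"
  shows "\<exists>a b. a \<notin> S \<and> b \<in> S \<and> {b, a} \<in> E"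
  using assms
proof (induction rule: converse_rtrancl_induct)
  case (step x z)
  show ?case
  proof (cases "z \<in> S")
    case True
    then show ?thesis using step by (auto simp: insert_commute)
  next
    case False
    then show ?thesis using step by blast
  qed
qed simp

text \<open>A path from \<open>u\<close> that cannot be prolonged ends in a leaf, hence at \<open>w\<close>. A vertex off the
  path would be reached through an edge leaving the path, and prolonging along that edge
  would produce a third leaf; a chord of the path would close a cycle.\<close>
theorem tree_with_two_leaves_is_hamiltonian_path:
  assumes fin: "finite V" and g: "graph_on V E" and conn: "connected_on V E"
    and acyc: "acyclic_graph E" and u: "u \<in> V" and w: "w \<in> V" and uw: "u \<noteq> w"
    and lvs: "leaves V E \<subseteq> {u, w}"
  shows "hamiltonian_path V E"
proof -
  have leaf: "x = u \<or> x = w" if "degree E x = 1" for x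
    using that lvs graph_on_degree_pos_imp_vertex[OF g, of x] unfolding leaves_def by auto
  have "(u, w) \<in> {(a, b). {a, b} \<in> E}\<^sup>*" using conn u w unfolding connected_on_def by blast
  then obtain a where ua: "{u, a} \<in> E" using uw by (metis (no_types, lifting) case_prodD converse_rtranclE mem_Collect_eq)
  obtain r where r: "r \<noteq> []" "set r \<inter> set [u] = {}" "distinct (take (Suc 0) [u] @ r)"
    "walk E (take (Suc 0) [u] @ r)" "degree E (last r) = 1"
    by (rule acyclic_path_branch_extends_to_leaf[OF fin g acyc, of "[u]" 0 a]) (use ua graph_on_edgeD[OF g ua] in auto)
  define P where "P = u # r"
  have dP: "distinct P" and sP: "walk E P" using r(3,4) unfolding P_def by simp_all
  have "last r \<noteq> u" using r(1,2) by auto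
  then have "last r = w" using leaf[OF r(5)] by blast
  then have uP: "u \<in> set P" and wP: "w \<in> set P" using r(1) unfolding P_def by auto
  have "set P \<subseteq> V" using walk_set_subset[OF sP g] r(1) unfolding P_def by (cases r) auto
  moreover have "x \<in> set P" if x: "x \<in> V" for x
  proof (rule ccontr)
    assume "x \<notin> set P"
    then obtain a b where ab: "a \<notin> set P" "b \<in> set P" "{b, a} \<in> E"
      using reachable_set_has_entering_edge[of x u E "set P"] conn x u uP
      unfolding connected_on_def by blast
    then obtain j where j: "j < length P" "P ! j = b" by (meson in_set_conv_nth)
    obtain r' where "r' \<noteq> []" "set r' \<inter> set P = {}" "degree E (last r') = 1"
      by (rule acyclic_path_branch_extends_to_leaf[OF fin g acyc dP sP j(1) ab(1)])
        (use ab(3) j(2) in \<open>simp add: insert_commute\<close>)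
    then have "last r' \<notin> set P" and "last r' = u \<or> last r' = w"
      using leaf last_in_set by blast+
    then show False using uP wP by blast
  qed
  ultimately have setP: "set P = V" by blast
  have "E = {{P ! i, P ! Suc i} | i. Suc i < length P}"
  proof
    show "{{P ! i, P ! Suc i} | i. Suc i < length P} \<subseteq> E"
      using successively_nth[OF sP] by blast
    show "E \<subseteq> {{P ! i, P ! Suc i} | i. Suc i < length P}"
    proof
      fix e assume e: "e \<in> E"
      then obtain p q where pq: "e = {p, q}" "p \<in> V" "q \<in> V" "p \<noteq> q"
        using g unfolding graph_on_def by blast
      then obtain i l where il: "i < length P" "P ! i = p" "l < length P" "P ! l = q"
        using setP by (metis in_set_conv_nth)
      then have "i < l \<or> l < i" using pq(4) by (metis linorder_neqE_nat)
      then show "e \<in> {{P ! i, P ! Suc i} | i. Suc i < length P}"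
      proof
        assume "i < l"
        then have "l = Suc i" using acyclic_path_no_chord[OF dP sP acyc] e pq il by simp
        then show ?thesis using pq il by auto
      next
        assume "l < i"
        then have "i = Suc l"
          using acyclic_path_no_chord[OF dP sP acyc] e pq il by (simp add: insert_commute)
        then show ?thesis using pq il by (auto simp: insert_commute)
      qed
    qed
  qed
  then show ?thesis unfolding hamiltonian_path_def using dP setP by blast
qed

lemma graph_on_delete_vertices:
  assumes "graph_on V E"
  shows "graph_on (V - S) (delete_vertices E S)"
  unfolding graph_on_def
proof
  fix e assume "e \<in> delete_vertices E S"
  then have e: "e \<in> E" "e \<inter> S = {}" unfolding delete_vertices_def by auto
  then obtain x y where "e = {x, y}" "x \<in> V" "y \<in> V" "x \<noteq> y"
    using assms unfolding graph_on_def by blast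
  then show "e \<in> {{x, y} | x y. x \<in> V - S \<and> y \<in> V - S \<and> x \<noteq> y}" using e(2) by auto
qed

lemma degree_delete_vertices:
  assumes "\<forall>e\<in>E. x \<in> e \<longrightarrow> e \<inter> S = {}"
  shows "degree (delete_vertices E S) x = degree E x"
proof -
  have "{e \<in> delete_vertices E S. x \<in> e} = {e \<in> E. x \<in> e}"
    using assms unfolding delete_vertices_def by blast
  then show ?thesis unfolding degree_def by simp
qed

lemma leaves_delete_vertices:
  assumes g: "graph_on V E"
  shows "leaves (V - S) (delete_vertices E S) \<subseteq> leaves V E \<union> {x. \<exists>v\<in>S. {v, x} \<in> E}"
proof
  fix x assume x: "x \<in> leaves (V - S) (delete_vertices E S)"
  then have xS: "x \<notin> S" unfolding leaves_def by simp
  show "x \<in> leaves V E \<union> {x. \<exists>v\<in>S. {v, x} \<in> E}"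
  proof (cases "\<exists>v\<in>S. {v, x} \<in> E")
    case False
    have "e \<inter> S = {}" if e: "e \<in> E" "x \<in> e" for e
    proof -
      obtain y where "e = {x, y}" using graph_on_edge_containing[OF g e] by blast
      then show ?thesis using False e(1) xS by (auto simp: insert_commute)
    qed
    then have "degree E x = 1"
      using x degree_delete_vertices[of E x S] unfolding leaves_def by simp
    then show ?thesis using x unfolding leaves_def by simp
  qed simp
qed

text \<open>A walk that enters a pendant vertex comes from, and returns to, its unique neighbour;
  the induction tracks that neighbour while the walk sits in \<open>S\<close>.\<close>
lemma connected_on_delete_pendant_vertices:
  assumes conn: "connected_on V E"
    and pendant: "\<forall>v\<in>S. \<exists>z. z \<notin> S \<and> (\<forall>y. {v, y} \<in> E \<longleftrightarrow> y = z)"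
  shows "connected_on (V - S) (delete_vertices E S)"
  unfolding connected_on_def
proof (intro ballI)
  let ?R = "{(a, b). {a, b} \<in> delete_vertices E S}\<^sup>*"
  fix x y assume x: "x \<in> V - S" and y: "y \<in> V - S"
  have "(x, y) \<in> {(a, b). {a, b} \<in> E}\<^sup>*" using conn x y unfolding connected_on_def by blast
  moreover have "(z \<notin> S \<longrightarrow> (x, z) \<in> ?R) \<and> (z \<in> S \<longrightarrow> (\<exists>p. p \<notin> S \<and> {z, p} \<in> E \<and> (x, p) \<in> ?R))"
    if "(x, z) \<in> {(a, b). {a, b} \<in> E}\<^sup>*" for z
    using that
  proof (induction rule: rtrancl_induct)
    case base
    then show ?case using x by simp
  next
    case (step z z')
    then have zz': "{z, z'} \<in> E" by simp
    show ?case
    proof (cases "z \<in> S")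
      case z: True
      then obtain p where p: "p \<notin> S" "\<forall>y. {z, y} \<in> E \<longleftrightarrow> y = p" using pendant by blast
      obtain p' where "{z, p'} \<in> E" "(x, p') \<in> ?R" using step.IH z by blast
      moreover from this have "p' = p" using p(2) by blast
      ultimately have "(x, p) \<in> ?R" by simp
      moreover have "z' = p" using zz' p(2) by blast
      ultimately show ?thesis using p(1) by blast
    next
      case z: False
      then have xz: "(x, z) \<in> ?R" using step.IH by blast
      show ?thesis
      proof (cases "z' \<in> S")
        case True
        have "{z', z} \<in> E" using zz' by (simp add: insert_commute)
        then show ?thesis using True xz z by blast
      next
        case False
        then have "{z, z'} \<in> delete_vertices E S" using zz' z unfolding delete_vertices_def by blast
        then have "(x, z') \<in> ?R" using xz by (simp add: rtrancl.rtrancl_into_rtrancl)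
        then show ?thesis using False by blast
      qed
    qed
  qed
  ultimately show "(x, y) \<in> ?R" using y by blast
qed

theorem lemma2:
  fixes V :: "'a set" and t :: "'a set set" and n k :: nat and u w :: 'a
    and Vuw Vu Vw :: "'a set"
  assumes "finite V" and "card V = n"
    and "k > 0"
    and "u \<in> V" and "w \<in> V" and "u \<noteq> w"
    and "Vuw \<subseteq> V - {u, w}" and "card Vuw = k"
    and "Vuw = Vu \<union> Vw" and "Vu \<inter> Vw = {}"
    and "spanning_tree V t"
    and "card (leaves V t) \<le> k"
    and "\<forall>v\<in>Vu. \<forall>y. {v, y} \<in> t \<longleftrightarrow> y = u"
    and "\<forall>v\<in>Vw. \<forall>y. {v, y} \<in> t \<longleftrightarrow> y = w"
  shows "hamiltonian_path (V - Vuw) (delete_vertices t Vuw) \<and> card (V - Vuw) = n - k"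
proof -
  note fin = assms(1) and u = assms(4) and w = assms(5) and sub = assms(7)
    and Vuw = assms(9) and hu = assms(13) and hw = assms(14)
  have g: "graph_on V t" and conn: "connected_on V t" and acyc: "acyclic_graph t"
    using assms(11) unfolding spanning_tree_def by auto
  have pendant: "\<forall>v\<in>Vuw. \<exists>z. z \<notin> Vuw \<and> (\<forall>y. {v, y} \<in> t \<longleftrightarrow> y = z)"
    using hu hw sub Vuw by blast
  have "Vuw \<subseteq> leaves V t"
    using pendant sub degree_eq_1_if_unique_neighbour[OF g] unfolding leaves_def by blast
  then have leaves_t: "leaves V t = Vuw"
    using card_seteq[of "leaves V t" Vuw] fin assms(8,12) unfolding leaves_def by simp
  have "leaves (V - Vuw) (delete_vertices t Vuw) \<subseteq> {u, w}"
  proof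
    fix x assume x: "x \<in> leaves (V - Vuw) (delete_vertices t Vuw)"
    then have "x \<notin> Vuw" unfolding leaves_def by simp
    then obtain v where "v \<in> Vuw" "{v, x} \<in> t" using x leaves_delete_vertices[OF g] leaves_t by blast
    then show "x \<in> {u, w}" using hu hw Vuw by blast
  qed
  then have "hamiltonian_path (V - Vuw) (delete_vertices t Vuw)"
  proof (intro tree_with_two_leaves_is_hamiltonian_path)
    show "acyclic_graph (delete_vertices t Vuw)"
      using acyc by (rule acyclic_graph_subset) (auto simp: delete_vertices_def)
  qed (use fin graph_on_delete_vertices[OF g] connected_on_delete_pendant_vertices[OF conn pendant]
      u w sub assms(6) in auto)
  moreover have "card (V - Vuw) = n - k"
    using card_Diff_subset[of Vuw V] finite_subset[OF _ fin] sub assms(2,8) by auto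
  ultimately show ?thesis ..
qed

end
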